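(* Let $\Gamma=(V,E)$ be a simple graph of order $n$ and maximum degree $\Delta$. Then the global defensive alliance number of $\Gamma$ satisfies $$\gamma_{a}(\Gamma)\ge \left\lceil \frac{2n}{\Delta+3}\right\rceil$$ and the global strong defensive alliance number of $\Gamma$ satisfies $$\gamma_{\hat{a}}(\Gamma)\ge \left\lceil \frac{n}{\left\lfloor\frac{\Delta}{2}\right\rfloor+1}\right\rceil.$$
   Context: For $S\subseteq V$ and $v\in V$, $N_S(v)=\{u\in S: u\sim v\}$ and $N_{V\setminus S}(v)=\{u\in V\setminus S: u\sim v\}$. A nonempty set $S\subseteq V$ is a defensive alliance if $|N_S(v)|+1\ge |N_{V\setminus S}(v)|$ for every $v\in S$, and a strong defensive alliance if $|N_S(v)|\ge |N_{V\setminus S}(v)|$ for every $v\in S$. A (strong) defensive alliance is global if it is a dominating set, i.e. every vertex of $V\setminus S$ is adjacent to some vertex of $S$. $\gamma_a(\Gamma)$ (resp. $\gamma_{\hat a}(\Gamma)$) is the minimum cardinality of a global defensive (resp. global strong defensive) alliance. *)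

theory Defs
  imports Complex_Main
begin

definition simple_graph :: "'a set \<Rightarrow> ('a \<Rightarrow> 'a \<Rightarrow> bool) \<Rightarrow> bool" where
  "simple_graph V E \<longleftrightarrow> finite V \<and> (\<forall>u v. E u v \<longrightarrow> u \<in> V \<and> v \<in> V)
     \<and> (\<forall>u v. E u v \<longrightarrow> E v u) \<and> (\<forall>v. \<not> E v v)"

definition nbhd_in :: "('a \<Rightarrow> 'a \<Rightarrow> bool) \<Rightarrow> 'a set \<Rightarrow> 'a \<Rightarrow> 'a set" where
  "nbhd_in E S v = {u \<in> S. E u v}"

definition degree :: "'a set \<Rightarrow> ('a \<Rightarrow> 'a \<Rightarrow> bool) \<Rightarrow> 'a \<Rightarrow> nat" where
  "degree V E v = card (nbhd_in E V v)"

definition max_degree :: "'a set \<Rightarrow> ('a \<Rightarrow> 'a \<Rightarrow> bool) \<Rightarrow> nat" where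
  "max_degree V E = Max (degree V E ` V)"

definition defensive_alliance :: "'a set \<Rightarrow> ('a \<Rightarrow> 'a \<Rightarrow> bool) \<Rightarrow> 'a set \<Rightarrow> bool" where
  "defensive_alliance V E S \<longleftrightarrow> S \<noteq> {} \<and> S \<subseteq> V \<and>
     (\<forall>v\<in>S. card (nbhd_in E S v) + 1 \<ge> card (nbhd_in E (V - S) v))"

definition strong_defensive_alliance :: "'a set \<Rightarrow> ('a \<Rightarrow> 'a \<Rightarrow> bool) \<Rightarrow> 'a set \<Rightarrow> bool" where
  "strong_defensive_alliance V E S \<longleftrightarrow> S \<noteq> {} \<and> S \<subseteq> V \<and>
     (\<forall>v\<in>S. card (nbhd_in E S v) \<ge> card (nbhd_in E (V - S) v))"

definition dominating :: "'a set \<Rightarrow> ('a \<Rightarrow> 'a \<Rightarrow> bool) \<Rightarrow> 'a set \<Rightarrow> bool" where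
  "dominating V E S \<longleftrightarrow> S \<subseteq> V \<and> (\<forall>v\<in>V - S. \<exists>u\<in>S. E u v)"

definition global_defensive_alliance :: "'a set \<Rightarrow> ('a \<Rightarrow> 'a \<Rightarrow> bool) \<Rightarrow> 'a set \<Rightarrow> bool" where
  "global_defensive_alliance V E S \<longleftrightarrow> defensive_alliance V E S \<and> dominating V E S"

definition global_strong_defensive_alliance :: "'a set \<Rightarrow> ('a \<Rightarrow> 'a \<Rightarrow> bool) \<Rightarrow> 'a set \<Rightarrow> bool" where
  "global_strong_defensive_alliance V E S \<longleftrightarrow> strong_defensive_alliance V E S \<and> dominating V E S"

definition gda_number :: "'a set \<Rightarrow> ('a \<Rightarrow> 'a \<Rightarrow> bool) \<Rightarrow> nat" where
  "gda_number V E = Min (card ` {S. global_defensive_alliance V E S})"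

definition gsda_number :: "'a set \<Rightarrow> ('a \<Rightarrow> 'a \<Rightarrow> bool) \<Rightarrow> nat" where
  "gsda_number V E = Min (card ` {S. global_strong_defensive_alliance V E S})"

end

theory Submission
  imports Defs
begin

text \<open>Count the edges between a dominating set \<open>S\<close> and its complement: every outside vertex
  has a neighbour in \<open>S\<close>, so if each vertex of \<open>S\<close> has at most \<open>k\<close> neighbours outside, then
  \<open>n - |S| \<le> k |S|\<close>. In a defensive alliance the at most \<open>\<Delta>\<close> neighbours of a vertex of \<open>S\<close> are
  split so that at most \<open>\<lfloor>(\<Delta>+1)/2\<rfloor>\<close> lie outside, in a strong one at most \<open>\<lfloor>\<Delta>/2\<rfloor>\<close>; this gives
  \<open>2n \<le> (\<Delta>+3)|S|\<close> and \<open>n \<le> (\<lfloor>\<Delta>/2\<rfloor>+1)|S|\<close>.\<close>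

lemma dominating_card_le:
  assumes "finite V" "symp E" "dominating V E S"
    and outside_le: "\<And>v. v \<in> S \<Longrightarrow> card (nbhd_in E (V - S) v) \<le> k"
  shows "card V \<le> card S * (k + 1)"
proof -
  have "S \<subseteq> V" using assms(3) by (simp add: dominating_def)
  then have "finite S" using \<open>finite V\<close> by (rule finite_subset)
  have "card (V - S) = (\<Sum>u\<in>V - S. 1)" by simp
  also have "\<dots> \<le> (\<Sum>u\<in>V - S. card {v\<in>S. E v u})"
  proof (rule sum_mono)
    fix u assume "u \<in> V - S"
    then have "{v\<in>S. E v u} \<noteq> {}" using assms(3) by (auto simp: dominating_def)
    with \<open>finite S\<close> show "1 \<le> card {v\<in>S. E v u}" by (simp add: Suc_le_eq card_gt_0_iff)
  qed
  also have "\<dots> = (\<Sum>v\<in>S. card {u\<in>V - S. E v u})"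
    using sum.swap_restrict[of "V - S" S "\<lambda>_ _. 1::nat" "\<lambda>u v. E v u"] \<open>finite V\<close> \<open>finite S\<close>
    by simp
  also have "\<dots> = (\<Sum>v\<in>S. card (nbhd_in E (V - S) v))"
    using \<open>symp E\<close>
    by (intro sum.cong refl arg_cong[where f = card]) (auto simp: nbhd_in_def dest: sympD)
  also have "\<dots> \<le> card S * k" using sum_mono[of S _ "\<lambda>_. k", OF outside_le] by simp
  finally have "card (V - S) \<le> card S * k" .
  moreover have "card S \<le> card V" using \<open>finite V\<close> \<open>S \<subseteq> V\<close> by (rule card_mono)
  then have "card V = card (V - S) + card S"
    using \<open>finite S\<close> \<open>S \<subseteq> V\<close> by (simp add: card_Diff_subset)
  ultimately show ?thesis by simp
qed

lemma card_nbhd_in_split_le_max_degree: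
  assumes "simple_graph V E" "S \<subseteq> V" "v \<in> V"
  shows "card (nbhd_in E S v) + card (nbhd_in E (V - S) v) \<le> max_degree V E"
proof -
  have "finite V" using assms(1) by (simp add: simple_graph_def)
  have "card (nbhd_in E S v) + card (nbhd_in E (V - S) v) = degree V E v"
  proof -
    have "nbhd_in E V v = nbhd_in E S v \<union> nbhd_in E (V - S) v"
      using \<open>S \<subseteq> V\<close> by (auto simp: nbhd_in_def)
    moreover have "finite (nbhd_in E V v)" using \<open>finite V\<close> by (simp add: nbhd_in_def)
    ultimately show ?thesis
      unfolding degree_def by (simp add: card_Un_disjoint nbhd_in_def disjoint_iff)
  qed
  also have "\<dots> \<le> max_degree V E"
    unfolding max_degree_def using \<open>finite V\<close> \<open>v \<in> V\<close> by simp
  finally show ?thesis .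
qed

lemma global_defensive_alliance_card_bound:
  assumes "simple_graph V E" "global_defensive_alliance V E S"
  shows "2 * card V \<le> card S * (max_degree V E + 3)"
proof -
  let ?\<Delta> = "max_degree V E"
  have "card V \<le> card S * ((?\<Delta> + 1) div 2 + 1)"
  proof (rule dominating_card_le)
    fix v assume "v \<in> S"
    moreover have "S \<subseteq> V" "\<forall>v\<in>S. card (nbhd_in E (V - S) v) \<le> card (nbhd_in E S v) + 1"
      using assms(2) by (auto simp: global_defensive_alliance_def defensive_alliance_def)
    ultimately have "card (nbhd_in E S v) + card (nbhd_in E (V - S) v) \<le> ?\<Delta>"
      "card (nbhd_in E (V - S) v) \<le> card (nbhd_in E S v) + 1"
      using card_nbhd_in_split_le_max_degree[OF assms(1)] by auto
    then show "card (nbhd_in E (V - S) v) \<le> (?\<Delta> + 1) div 2" by linarith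
  qed (use assms in \<open>auto simp: simple_graph_def symp_def global_defensive_alliance_def\<close>)
  moreover have "card S * (2 * ((?\<Delta> + 1) div 2 + 1)) \<le> card S * (?\<Delta> + 3)"
    by (intro mult_le_mono2) presburger
  ultimately show ?thesis by simp
qed

lemma global_strong_defensive_alliance_card_bound:
  assumes "simple_graph V E" "global_strong_defensive_alliance V E S"
  shows "card V \<le> card S * (max_degree V E div 2 + 1)"
proof (rule dominating_card_le)
  fix v assume "v \<in> S"
  moreover have "S \<subseteq> V" "\<forall>v\<in>S. card (nbhd_in E (V - S) v) \<le> card (nbhd_in E S v)"
    using assms(2) by (auto simp: global_strong_defensive_alliance_def strong_defensive_alliance_def)
  ultimately have "card (nbhd_in E S v) + card (nbhd_in E (V - S) v) \<le> max_degree V E"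
    "card (nbhd_in E (V - S) v) \<le> card (nbhd_in E S v)"
    using card_nbhd_in_split_le_max_degree[OF assms(1)] by auto
  then show "card (nbhd_in E (V - S) v) \<le> max_degree V E div 2" by linarith
qed (use assms in \<open>auto simp: simple_graph_def symp_def global_strong_defensive_alliance_def\<close>)

lemma Min_card_attained:
  assumes "finite V" "P V" "\<And>S. P S \<Longrightarrow> S \<subseteq> V"
  obtains S where "P S" "card S = Min (card ` {S. P S})"
proof -
  have "finite {S. P S}" using assms by (blast intro: finite_subset[of _ "Pow V"])
  then have "Min (card ` {S. P S}) \<in> card ` {S. P S}" using \<open>P V\<close> by (intro Min_in) auto
  then show ?thesis using that by auto
qed

lemma gda_number_attained:
  assumes "finite V" "V \<noteq> {}"
  obtains S where "global_defensive_alliance V E S" "card S = gda_number V E"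
proof (rule Min_card_attained[of V "global_defensive_alliance V E"])
  show "global_defensive_alliance V E V"
    using assms(2)
    by (auto simp: global_defensive_alliance_def defensive_alliance_def dominating_def nbhd_in_def)
qed (use assms that in \<open>auto simp: gda_number_def global_defensive_alliance_def dominating_def\<close>)

lemma gsda_number_attained:
  assumes "finite V" "V \<noteq> {}"
  obtains S where "global_strong_defensive_alliance V E S" "card S = gsda_number V E"
proof (rule Min_card_attained[of V "global_strong_defensive_alliance V E"])
  show "global_strong_defensive_alliance V E V"
    using assms(2)
    by (auto simp: global_strong_defensive_alliance_def strong_defensive_alliance_def
        dominating_def nbhd_in_def)
qed (use assms that in
    \<open>auto simp: gsda_number_def global_strong_defensive_alliance_def dominating_def\<close>)

lemma of_int_ceiling_divide_le:
  fixes x c :: real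
  assumes "x \<le> real m * c" "0 < c"
  shows "of_int \<lceil>x / c\<rceil> \<le> real m"
proof -
  have "\<lceil>x / c\<rceil> \<le> int m" using assms by (simp add: ceiling_le_iff divide_le_eq)
  then show ?thesis by (metis of_int_le_iff of_int_of_nat_eq)
qed

theorem theorem4:
  fixes V :: "'a set" and E :: "'a \<Rightarrow> 'a \<Rightarrow> bool"
  assumes "simple_graph V E" and "V \<noteq> {}"
  shows "real (gda_number V E) \<ge> of_int \<lceil>2 * real (card V) / (real (max_degree V E) + 3)\<rceil>
       \<and> real (gsda_number V E) \<ge> of_int \<lceil>real (card V) / (real (max_degree V E div 2) + 1)\<rceil>"
proof -
  have "finite V" using assms(1) by (simp add: simple_graph_def)
  obtain S where S: "global_defensive_alliance V E S" "card S = gda_number V E"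
    using gda_number_attained[OF \<open>finite V\<close> assms(2)] .
  obtain T where T: "global_strong_defensive_alliance V E T" "card T = gsda_number V E"
    using gsda_number_attained[OF \<open>finite V\<close> assms(2)] .
  have "real (2 * card V) \<le> real (card S * (max_degree V E + 3))"
    using global_defensive_alliance_card_bound[OF assms(1) S(1)] by (rule of_nat_mono)
  moreover have "real (card V) \<le> real (card T * (max_degree V E div 2 + 1))"
    using global_strong_defensive_alliance_card_bound[OF assms(1) T(1)] by (rule of_nat_mono)
  ultimately show ?thesis
    using S(2) T(2) by (intro conjI of_int_ceiling_divide_le) (simp_all add: algebra_simps)
qed

end
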